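(* Let $\mathcal{G}_\mu=(\mathcal{V}_\mu,\mathcal{E}_\mu)$ be a connected undirected graph on the finite node set $\mathcal{V}_\mu=\{1,\dots,V_\mu\}$ (each node is a distributed generator, DG), with symmetric binary adjacency matrix $\mathcal{A}_\mu=[a_{ij}]$ ($a_{ii}=0$, $a_{ij}=a_{ji}=1$ iff $(i,j)\in\mathcal{E}_\mu$). For $i\in\mathcal{V}_\mu$ let $\mathcal{E}_{\mu,i}$ be the set of edges incident to $i$, so $|\mathcal{E}_{\mu,i}|$ is the degree of node $i$. Fix reference values $x_{\omega,ref},x_{U,ref}\in\mathbb{R}$ and control gains $K_{\omega i},K_{Pi},K_{Ui}>0$. Consider the discrete-time system, for $k\ge 0$ and each $i\in\mathcal{V}_\mu$, \[ x_{\omega i}(k+1)=x_{\omega i}(k)+u_{\omega i}(k),\quad x_{Pi}(k+1)=x_{Pi}(k)+u_{Pi}(k),\quad x_{Ui}(k+1)=x_{Ui}(k)+u_{Ui}(k), \] with the controls \[ u_{\omega i}(k)=K_{\omega i}\big(x_{\omega,ref}-x_{\omega i}(k)\big),\qquad u_{Pi}(k)=K_{Pi}\sum_{j:(i,j)\in\mathcal{E}_{\mu}} a_{ij}\big(x_{Pj}(k-1)-x_{Pi}(k)\big),\qquad u_{Ui}(k)=K_{Ui}\big(x_{U,ref}-x_{Ui}(k)\big), \] and arbitrary initial values (including $x_P(-1)$). Here $x_{\omega i}=\omega_i$ is the angular frequency of DG $i$, $x_{Pi}=m_{Pi}P_i$ its droop-scaled active power output, and $x_{Ui}=U_i$ its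 voltage magnitude, where the droop coefficients satisfy $m_{Pi}P_{\max,i}=m_{Pj}P_{\max,j}$ for all $i,j$, with $P_{\max,i}>0$ the active power rating of DG $i$. If \[ 0<K_{\omega i}<2,\quad 0<K_{Ui}<2,\quad 0<|\mathcal{E}_{\mu,i}|\,K_{Pi}<1\qquad\text{for all } i\in\mathcal{V}_\mu, \] then, as $k\to\infty$, $\omega_i(k)\to x_{\omega,ref}$, $U_i(k)\to x_{U,ref}$, and $\big|P_i(k)/P_{\max,i}-P_j(k)/P_{\max,j}\big|\to 0$ (equivalently $|x_{Pi}(k)-x_{Pj}(k)|\to0$) for all $i,j\in\mathcal{V}_\mu$; i.e., frequency regulation, active power sharing and voltage regulation are achieved asymptotically.
   Context: This models distributed secondary control of an islanded microgrid in which each DG runs droop control $\omega_i=\omega_{ni}-m_{Pi}P_i$, $U_i=U_{ni}-n_{Qi}Q_i$, and the set points are updated every sampling interval $T_s$ chosen no smaller than the maximal communication delay, so that neighbours' power information arrives with exactly one step of delay (the term $x_{Pj}(k-1)$). The delayed neighbour exchange takes place over the undirected communication graph $\mathcal{G}_\mu$. *)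

theory Defs
  imports Complex_Main
begin

definition undirected_graph :: "('n \<Rightarrow> 'n \<Rightarrow> bool) \<Rightarrow> bool" where
  "undirected_graph adj \<longleftrightarrow> (\<forall>i j. adj i j \<longleftrightarrow> adj j i) \<and> (\<forall>i. \<not> adj i i)"

definition connected_graph :: "('n \<Rightarrow> 'n \<Rightarrow> bool) \<Rightarrow> bool" where
  "connected_graph adj \<longleftrightarrow> (\<forall>i j. adj\<^sup>*\<^sup>* i j)"

definition degree :: "('n \<Rightarrow> 'n \<Rightarrow> bool) \<Rightarrow> 'n \<Rightarrow> nat" where
  "degree adj i = card {j. adj i j}"

end

theory Submission
  imports Defs
begin

(*
  Substituting y n = x_P (n - 1) turns the power dynamics into the second-order recursion
  y (n + 2) i = a i * y (n + 1) i + K i * (sum of y n j over the neighbours j of i) with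
  a i = 1 - deg i * K i > 0: each new value is a convex combination, with weights at least
  alpha > 0, of values in the window of the two preceding time steps.  So the maximum over
  a window never increases and the minimum never decreases.  A deficit below the window
  maximum at a node r persists at r and reaches every node within two steps per edge of a
  walk to r, shrinking by at most a factor alpha per step; walks of length at most D exist,
  so after 2D + 1 steps the whole window has dropped by alpha^(2D+1) times the deficit.
  Since r lies in the lower or the upper half of the window range, the range contracts by
  the factor 1 - alpha^(2D+1)/2 every 2D + 1 steps.  Frequency and voltage follow scalar
  recursions with contraction factor |1 - K| < 1.
*)

lemma walk_length_le_card:
  fixes R :: "'a::finite \<Rightarrow> 'a \<Rightarrow> bool"
  assumes "R\<^sup>*\<^sup>* x y"
  shows "\<exists>p \<le> card {(u, v). R u v}. (R ^^ p) x y"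
proof -
  let ?E = "{(u, v). R u v}"
  have "(x, y) \<in> ?E\<^sup>*" using assms by (simp add: rtrancl_def)
  then obtain p where "p \<le> card ?E" "(x, y) \<in> ?E ^^ p"
    using rtrancl_finite_eq_relpow[of ?E] by auto
  moreover have "R ^^ p = (\<lambda>u v. (u, v) \<in> ?E ^^ p)"
    using relpowp_relpow_eq[of p ?E] by simp
  ultimately show ?thesis by auto
qed

lemma sum_le_card_mult_diff:
  fixes f :: "'a \<Rightarrow> real"
  assumes "finite A" "r \<in> A" "\<And>j. j \<in> A \<Longrightarrow> f j \<le> M" "f r \<le> M - e"
  shows "sum f A \<le> real (card A) * M - e"
proof -
  have "sum f A \<le> (\<Sum>j\<in>A. M - (if j = r then e else 0))"
    using assms by (intro sum_mono) auto
  also have "\<dots> = real (card A) * M - e"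
    using assms(1,2) by (simp add: sum_subtractf)
  finally show ?thesis .
qed

locale delayed_averaging =
  fixes adj :: "'n::finite \<Rightarrow> 'n \<Rightarrow> bool" and a K :: "'n \<Rightarrow> real"
  assumes strongly_connected: "\<And>i j. adj\<^sup>*\<^sup>* i j"
    and self_weight_pos: "\<And>i. 0 < a i"
    and gain_pos: "\<And>i. 0 < K i"
    and weights_sum_one: "\<And>i. a i + K i * real (card {j. adj i j}) = 1"
begin

definition solution :: "(nat \<Rightarrow> 'n \<Rightarrow> real) \<Rightarrow> bool" where
  "solution y \<longleftrightarrow>
     (\<forall>n i. y (Suc (Suc n)) i = a i * y (Suc n) i + K i * (\<Sum>j\<in>{j. adj i j}. y n j))"

lemma solution_uminus: "solution y \<Longrightarrow> solution (\<lambda>n i. - y n i)"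
  unfolding solution_def by (simp add: sum_negf)

lemma solution_le:
  assumes "solution y" and "y (Suc n) i \<le> M - e"
    and "(\<Sum>j\<in>{j. adj i j}. y n j) \<le> real (card {j. adj i j}) * M - e'"
  shows "y (Suc (Suc n)) i \<le> M - a i * e - K i * e'"
proof -
  have "y (Suc (Suc n)) i = a i * y (Suc n) i + K i * (\<Sum>j\<in>{j. adj i j}. y n j)"
    using assms(1) unfolding solution_def by blast
  also have "\<dots> \<le> a i * (M - e) + K i * (real (card {j. adj i j}) * M - e')"
    using assms(2,3) self_weight_pos[of i] gain_pos[of i]
    by (intro add_mono mult_left_mono) auto
  also have "\<dots> = (a i + K i * real (card {j. adj i j})) * M - a i * e - K i * e'"
    by (simp add: algebra_simps)
  finally show ?thesis using weights_sum_one[of i] by simp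
qed

definition window_le :: "(nat \<Rightarrow> 'n \<Rightarrow> real) \<Rightarrow> nat \<Rightarrow> real \<Rightarrow> bool" where
  "window_le y n M \<longleftrightarrow> (\<forall>j. y n j \<le> M \<and> y (Suc n) j \<le> M)"

lemma window_le_mono: "window_le y n M \<Longrightarrow> M \<le> M' \<Longrightarrow> window_le y n M'"
  unfolding window_le_def by (meson order_trans)

lemma window_le_Suc:
  assumes "solution y" "window_le y n M"
  shows "window_le y (Suc n) M"
proof -
  have "y (Suc (Suc n)) i \<le> M" for i
    using solution_le[OF assms(1), of n i M 0 0] assms(2) sum_bounded_above[of "{j. adj i j}"]
    unfolding window_le_def by auto
  then show ?thesis using assms(2) unfolding window_le_def by simp
qed

lemma window_le_add: "solution y \<Longrightarrow> window_le y n M \<Longrightarrow> window_le y (n + t) M"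
  by (induction t) (auto intro: window_le_Suc)

definition min_weight :: real where
  "min_weight = Min (range a \<union> range K)"

lemma min_weight_le_self_weight: "min_weight \<le> a i"
  unfolding min_weight_def by (intro Min_le) auto

lemma min_weight_le_gain: "min_weight \<le> K i"
  unfolding min_weight_def by (intro Min_le) auto

lemma min_weight_pos: "0 < min_weight"
  unfolding min_weight_def using self_weight_pos gain_pos by (subst Min_gr_iff) auto

lemma min_weight_le_one: "min_weight \<le> 1"
proof -
  have "0 \<le> K undefined * real (card {j. adj undefined j})"
    using gain_pos[of undefined] by simp
  then show ?thesis
    using min_weight_le_self_weight[of undefined] weights_sum_one[of undefined] by linarith
qed

lemma deficit_persists:
  assumes "solution y" "window_le y n M" "y (Suc n) r \<le> M - \<delta>" "0 \<le> \<delta>"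
  shows "y (Suc n + t) r \<le> M - min_weight ^ t * \<delta>"
proof (induction t)
  case 0
  then show ?case using assms(3) by simp
next
  case (Suc t)
  have "(\<Sum>j\<in>{j. adj r j}. y (n + t) j) \<le> real (card {j. adj r j}) * M - 0"
    using window_le_add[OF assms(1,2), of t] sum_bounded_above[of "{j. adj r j}"]
    unfolding window_le_def by auto
  then have "y (Suc n + Suc t) r \<le> M - a r * (min_weight ^ t * \<delta>)"
    using solution_le[OF assms(1), of "n + t" r M "min_weight ^ t * \<delta>" 0] Suc.IH by simp
  moreover have "min_weight * (min_weight ^ t * \<delta>) \<le> a r * (min_weight ^ t * \<delta>)"
    using min_weight_le_self_weight min_weight_pos assms(4) by (intro mult_right_mono) auto
  ultimately show ?case by simp
qed

lemma deficit_spreads: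
  assumes "solution y" "window_le y n M" "y (Suc n) r \<le> M - \<delta>" "0 \<le> \<delta>"
  shows "(adj ^^ p) j r \<Longrightarrow> 2 * p \<le> t \<Longrightarrow> y (Suc n + t) j \<le> M - min_weight ^ t * \<delta>"
proof (induction p arbitrary: j t)
  case 0
  then show ?case using deficit_persists[OF assms] by simp
next
  case (Suc p)
  obtain j' where j': "adj j j'" "(adj ^^ p) j' r"
    using Suc.prems(1) by (blast elim: relpowp_Suc_E2)
  define s where "s = t - 2"
  have t: "t = Suc (Suc s)" and s: "2 * p \<le> s"
    using Suc.prems(2) unfolding s_def by auto
  let ?e = "min_weight ^ s * \<delta>"
  have window: "window_le y (Suc n + s) M"
    using window_le_add[OF assms(1,2), of "Suc s"] by simp
  have "(\<Sum>i\<in>{i. adj j i}. y (Suc n + s) i) \<le> real (card {i. adj j i}) * M - ?e"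
    using window j'(1) Suc.IH[OF j'(2) s]
    by (intro sum_le_card_mult_diff) (auto simp: window_le_def)
  then have "y (Suc n + t) j \<le> M - K j * ?e"
    using solution_le[OF assms(1), of "Suc n + s" j M 0] window t
    unfolding window_le_def by simp
  moreover have "min_weight ^ t * \<delta> \<le> K j * ?e"
  proof -
    have "min_weight ^ t \<le> min_weight * min_weight ^ s"
      using t min_weight_pos min_weight_le_one by (simp add: mult_left_le_one_le)
    also have "\<dots> \<le> K j * min_weight ^ s"
      using min_weight_le_gain min_weight_pos by (intro mult_right_mono) auto
    finally have "min_weight ^ t * \<delta> \<le> (K j * min_weight ^ s) * \<delta>"
      using assms(4) by (rule mult_right_mono)
    then show ?thesis by (simp add: mult.assoc)
  qed
  ultimately show ?case by simp
qed

definition walk_bound :: nat where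
  "walk_bound = card {(i, j). adj i j}"

definition period :: nat where
  "period = Suc (2 * walk_bound)"

lemma window_drop:
  assumes "solution y" "window_le y n M" "y (Suc n) r \<le> M - \<delta>" "0 \<le> \<delta>"
  shows "window_le y (n + period) (M - min_weight ^ period * \<delta>)"
  unfolding window_le_def
proof
  fix j
  obtain p where p: "2 * p \<le> 2 * walk_bound" "(adj ^^ p) j r"
    using walk_length_le_card[OF strongly_connected[of j r]] unfolding walk_bound_def by auto
  have "min_weight ^ period \<le> min_weight ^ (2 * walk_bound)"
    unfolding period_def using min_weight_pos min_weight_le_one by (intro power_decreasing) auto
  then have "min_weight ^ period * \<delta> \<le> min_weight ^ (2 * walk_bound) * \<delta>"
    using assms(4) by (rule mult_right_mono)
  then show "y (n + period) j \<le> M - min_weight ^ period * \<delta> \<and>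
      y (Suc (n + period)) j \<le> M - min_weight ^ period * \<delta>"
    using deficit_spreads[OF assms p(2) p(1)] deficit_spreads[OF assms p(2), of period] p(1)
    unfolding period_def by simp
qed

(* The lower bound is an upper bound for -y, so every upper estimate also bounds from below. *)
definition window_in :: "(nat \<Rightarrow> 'n \<Rightarrow> real) \<Rightarrow> nat \<Rightarrow> real \<Rightarrow> real \<Rightarrow> bool" where
  "window_in y n m M \<longleftrightarrow> window_le y n M \<and> window_le (\<lambda>n i. - y n i) n (- m)"

lemma window_in_uminus: "window_in (\<lambda>n i. - y n i) n (- M) (- m) \<longleftrightarrow> window_in y n m M"
  unfolding window_in_def by auto

lemma window_in_add: "solution y \<Longrightarrow> window_in y n m M \<Longrightarrow> window_in y (n + t) m M"
  unfolding window_in_def by (auto intro: window_le_add solution_uminus)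

lemma window_in_diff_le:
  assumes "window_in y n m M"
  shows "\<bar>y n i - y n j\<bar> \<le> M - m"
proof -
  have "m \<le> y n i" "y n i \<le> M" "m \<le> y n j" "y n j \<le> M"
    using assms unfolding window_in_def window_le_def by auto
  then show ?thesis by (auto simp: abs_le_iff)
qed

lemma window_in_exists: "\<exists>m M. window_in y n m M"
proof -
  let ?V = "range (y n) \<union> range (y (Suc n))"
  have "window_in y n (Min ?V) (Max ?V)"
    unfolding window_in_def window_le_def by (auto intro: Min_le Max_ge)
  then show ?thesis by blast
qed

lemma window_in_shrink_above:
  assumes "solution y" "window_in y n m M" "y (Suc n) r \<le> (m + M) / 2"
  shows "window_in y (n + period) m (M - min_weight ^ period * (M - m) / 2)"
proof -
  have "0 \<le> M - m" using window_in_diff_le[OF assms(2), of r r] by simp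
  then have "window_le y (n + period) (M - min_weight ^ period * (M - y (Suc n) r))"
    using window_drop[OF assms(1), of n M r "M - y (Suc n) r"] assms(2,3)
    unfolding window_in_def by simp
  moreover have "min_weight ^ period * ((M - m) / 2) \<le> min_weight ^ period * (M - y (Suc n) r)"
    using assms(3) min_weight_pos by (intro mult_left_mono) auto
  then have "M - min_weight ^ period * (M - y (Suc n) r) \<le> M - min_weight ^ period * (M - m) / 2"
    by simp
  ultimately have "window_le y (n + period) (M - min_weight ^ period * (M - m) / 2)"
    by (rule window_le_mono)
  then show ?thesis
    using window_in_add[OF assms(1,2), of period] unfolding window_in_def by simp
qed

definition contraction_rate :: real where
  "contraction_rate = 1 - min_weight ^ period / 2"

lemma contraction_rate_nonneg: "0 \<le> contraction_rate"
  using power_le_one[OF less_imp_le[OF min_weight_pos] min_weight_le_one, of period]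
  unfolding contraction_rate_def by simp

lemma contraction_rate_less_one: "contraction_rate < 1"
  unfolding contraction_rate_def using min_weight_pos by simp

lemma window_in_contract:
  assumes "solution y" "window_in y n m M"
  obtains m' M' where "M' - m' \<le> contraction_rate * (M - m)" "window_in y (n + period) m' M'"
proof (cases "y (Suc n) undefined \<le> (m + M) / 2")
  case True
  show ?thesis
    by (rule that[OF _ window_in_shrink_above[OF assms True]])
      (simp add: contraction_rate_def algebra_simps)
next
  case False
  have "window_in (\<lambda>n i. - y n i) n (- M) (- m)"
    using assms(2) by (simp only: window_in_uminus)
  moreover have "- y (Suc n) undefined \<le> (- M + - m) / 2" using False by simp
  ultimately have "window_in (\<lambda>n i. - y n i) (n + period)
      (- M) (- m - min_weight ^ period * (- m - - M) / 2)"
    by (rule window_in_shrink_above[OF solution_uminus[OF assms(1)]])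
  also have "- m - min_weight ^ period * (- m - - M) / 2 = - (m + min_weight ^ period * (M - m) / 2)"
    by (simp add: algebra_simps)
  finally have "window_in y (n + period) (m + min_weight ^ period * (M - m) / 2) M"
    by (simp only: window_in_uminus)
  then show ?thesis
    by (rule that[rotated]) (simp add: contraction_rate_def algebra_simps)
qed

lemma window_in_contract_power:
  assumes "solution y" "window_in y 0 m M"
  shows "\<exists>m' M'. M' - m' \<le> contraction_rate ^ q * (M - m) \<and> window_in y (q * period) m' M'"
proof (induction q)
  case 0
  then show ?case using assms(2) by auto
next
  case (Suc q)
  then obtain m' M' where
    IH: "M' - m' \<le> contraction_rate ^ q * (M - m)" "window_in y (q * period) m' M'"
    by blast
  obtain m'' M'' where
    "M'' - m'' \<le> contraction_rate * (M' - m')" "window_in y (q * period + period) m'' M''"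
    using window_in_contract[OF assms(1) IH(2)] by blast
  moreover have "contraction_rate * (M' - m') \<le> contraction_rate ^ Suc q * (M - m)"
    using mult_left_mono[OF IH(1) contraction_rate_nonneg] by (simp add: mult.assoc)
  moreover have "q * period + period = Suc q * period" by simp
  ultimately show ?case by (metis order_trans)
qed

lemma consensus_error_le:
  assumes "solution y" "window_in y 0 m M"
  shows "\<bar>y n i - y n j\<bar> \<le> contraction_rate ^ (n div period) * (M - m)"
proof -
  obtain m' M' where
    "M' - m' \<le> contraction_rate ^ (n div period) * (M - m)"
    "window_in y (n div period * period) m' M'"
    using window_in_contract_power[OF assms] by blast
  moreover from this(2) have "window_in y n m' M'"
    using window_in_add[OF assms(1), of "n div period * period" m' M' "n mod period"] by simp
  ultimately show ?thesis using window_in_diff_le[of y n m' M' i j] by linarith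
qed

theorem consensus:
  assumes "solution y"
  shows "(\<lambda>n. \<bar>y n i - y n j\<bar>) \<longlonglongrightarrow> 0"
proof -
  obtain m M where window: "window_in y 0 m M" using window_in_exists by blast
  have "filterlim (\<lambda>n. n div period) at_top sequentially"
    unfolding period_def by (rule filterlim_at_top_div_const_nat) simp
  then have "(\<lambda>n. contraction_rate ^ (n div period)) \<longlonglongrightarrow> 0"
    using contraction_rate_nonneg contraction_rate_less_one
    by (intro filterlim_compose[OF LIMSEQ_power_zero]) auto
  then have decay: "(\<lambda>n. contraction_rate ^ (n div period) * (M - m)) \<longlonglongrightarrow> 0"
    by (rule tendsto_mult_left_zero)
  show ?thesis
    by (rule real_tendsto_sandwich[OF _ _ tendsto_const decay])
      (simp_all add: consensus_error_le[OF assms window])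
qed

end

lemma delayed_consensus_converges:
  fixes adj :: "'n::finite \<Rightarrow> 'n \<Rightarrow> bool" and K :: "'n \<Rightarrow> real"
    and x :: "int \<Rightarrow> 'n \<Rightarrow> real"
  assumes "\<And>i j. adj\<^sup>*\<^sup>* i j" "\<And>i. 0 < K i" "\<And>i. real (card {j. adj i j}) * K i < 1"
    and dyn: "\<And>k i. k \<ge> 0 \<Longrightarrow>
      x (k + 1) i = x k i + K i * (\<Sum>j\<in>{j. adj i j}. x (k - 1) j - x k i)"
  shows "(\<lambda>k::nat. \<bar>x (int k) i - x (int k) j\<bar>) \<longlonglongrightarrow> 0"
proof -
  interpret delayed_averaging adj "\<lambda>i. 1 - real (card {j. adj i j}) * K i" K
    by unfold_locales (use assms(1-3) in auto)
  define y where "y n = x (int n - 1)" for n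
  have "solution y"
    unfolding solution_def
  proof (intro allI)
    fix n i
    have "y (Suc (Suc n)) i = x (int n) i + K i * (\<Sum>j\<in>{j. adj i j}. x (int n - 1) j - x (int n) i)"
      using dyn[of "int n" i] by (simp add: y_def add.commute)
    also have "\<dots> = (1 - real (card {j. adj i j}) * K i) * x (int n) i
        + K i * (\<Sum>j\<in>{j. adj i j}. x (int n - 1) j)"
      by (simp add: sum_subtractf algebra_simps)
    finally show "y (Suc (Suc n)) i = (1 - real (card {j. adj i j}) * K i) * y (Suc n) i
        + K i * (\<Sum>j\<in>{j. adj i j}. y n j)"
      by (simp add: y_def)
  qed
  then have "(\<lambda>n. \<bar>y (Suc n) i - y (Suc n) j\<bar>) \<longlonglongrightarrow> 0"
    by (intro LIMSEQ_Suc consensus)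
  then show ?thesis by (simp add: y_def)
qed

lemma first_order_tracking:
  fixes x :: "int \<Rightarrow> real"
  assumes "0 < K" "K < 2" and dyn: "\<And>k. k \<ge> 0 \<Longrightarrow> x (k + 1) = x k + K * (r - x k)"
  shows "(\<lambda>k::nat. x (int k)) \<longlonglongrightarrow> r"
proof -
  have error: "x (int k) - r = (1 - K) ^ k * (x 0 - r)" for k
  proof (induction k)
    case (Suc k)
    have "x (int (Suc k)) - r = (1 - K) * (x (int k) - r)"
      using dyn[of "int k"] by (simp add: add.commute algebra_simps)
    then show ?case using Suc.IH by simp
  qed simp
  then have closed_form: "x (int k) = (1 - K) ^ k * (x 0 - r) + r" for k
    by (simp add: algebra_simps)
  have "\<bar>1 - K\<bar> < 1" using assms(1,2) by simp
  then have "(\<lambda>k. (1 - K) ^ k * (x 0 - r) + r) \<longlonglongrightarrow> 0 * (x 0 - r) + r"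
    by (intro tendsto_intros LIMSEQ_power_zero) simp
  then show ?thesis by (simp add: closed_form)
qed

lemma scaled_ratio_diff:
  fixes mi mj Pi Pj p q :: real
  assumes "0 < mi" "0 < mj" "0 < Pi" "0 < Pj" "mi * Pi = mj * Pj"
  shows "\<bar>p / Pi - q / Pj\<bar> = \<bar>mi * p - mj * q\<bar> / (mi * Pi)"
proof -
  have "(mi * p - mj * q) / (mi * Pi) = mi * p / (mi * Pi) - mj * q / (mj * Pj)"
    using assms(5) by (simp add: diff_divide_distrib)
  also have "\<dots> = p / Pi - q / Pj" using assms(1,2) by simp
  finally have "\<bar>p / Pi - q / Pj\<bar> = \<bar>(mi * p - mj * q) / (mi * Pi)\<bar>" by simp
  also have "\<dots> = \<bar>mi * p - mj * q\<bar> / (mi * Pi)" using assms(1,3) by (simp add: abs_divide)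
  finally show ?thesis .
qed

theorem theorem1:
  fixes adj :: "'n::finite \<Rightarrow> 'n \<Rightarrow> bool"
    and x\<^sub>\<omega> x\<^sub>P x\<^sub>U P :: "int \<Rightarrow> 'n \<Rightarrow> real"
    and K\<^sub>\<omega> K\<^sub>P K\<^sub>U mP Pmax :: "'n \<Rightarrow> real"
    and \<omega>ref Uref :: real
  assumes graph: "undirected_graph adj"
    and conn: "connected_graph adj"
    and Kw: "\<And>i. 0 < K\<^sub>\<omega> i \<and> K\<^sub>\<omega> i < 2"
    and KU: "\<And>i. 0 < K\<^sub>U i \<and> K\<^sub>U i < 2"
    and KPpos: "\<And>i. 0 < K\<^sub>P i"
    and KP: "\<And>i. 0 < real (degree adj i) * K\<^sub>P i \<and> real (degree adj i) * K\<^sub>P i < 1"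
    and dyn_w: "\<And>k i. k \<ge> 0 \<Longrightarrow>
        x\<^sub>\<omega> (k + 1) i = x\<^sub>\<omega> k i + K\<^sub>\<omega> i * (\<omega>ref - x\<^sub>\<omega> k i)"
    and dyn_P: "\<And>k i. k \<ge> 0 \<Longrightarrow>
        x\<^sub>P (k + 1) i = x\<^sub>P k i + K\<^sub>P i * (\<Sum>j\<in>{j. adj i j}. x\<^sub>P (k - 1) j - x\<^sub>P k i)"
    and dyn_U: "\<And>k i. k \<ge> 0 \<Longrightarrow>
        x\<^sub>U (k + 1) i = x\<^sub>U k i + K\<^sub>U i * (Uref - x\<^sub>U k i)"
    and Pmax_pos: "\<And>i. 0 < Pmax i"
    and mP_pos: "\<And>i. 0 < mP i"
    and droop_equal: "\<And>i j. mP i * Pmax i = mP j * Pmax j"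
    and xP_def: "\<And>k i. x\<^sub>P k i = mP i * P k i"
  shows "(\<forall>i. (\<lambda>k::nat. x\<^sub>\<omega> (int k) i) \<longlonglongrightarrow> \<omega>ref)
       \<and> (\<forall>i. (\<lambda>k::nat. x\<^sub>U (int k) i) \<longlonglongrightarrow> Uref)
       \<and> (\<forall>i j. (\<lambda>k::nat. \<bar>P (int k) i / Pmax i - P (int k) j / Pmax j\<bar>) \<longlonglongrightarrow> 0)
       \<and> (\<forall>i j. (\<lambda>k::nat. \<bar>x\<^sub>P (int k) i - x\<^sub>P (int k) j\<bar>) \<longlonglongrightarrow> 0)"
proof -
  have power: "(\<lambda>k::nat. \<bar>x\<^sub>P (int k) i - x\<^sub>P (int k) j\<bar>) \<longlonglongrightarrow> 0" for i j
    using conn KPpos KP dyn_P unfolding connected_graph_def degree_def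
    by (intro delayed_consensus_converges) auto
  have "(\<lambda>k::nat. \<bar>P (int k) i / Pmax i - P (int k) j / Pmax j\<bar>) \<longlonglongrightarrow> 0" for i j
    using tendsto_divide_zero[OF power, of i j "mP i * Pmax i"]
    by (simp add: scaled_ratio_diff[OF mP_pos mP_pos Pmax_pos Pmax_pos droop_equal] xP_def)
  moreover have "(\<lambda>k::nat. x\<^sub>\<omega> (int k) i) \<longlonglongrightarrow> \<omega>ref" for i
    using Kw dyn_w by (intro first_order_tracking) auto
  moreover have "(\<lambda>k::nat. x\<^sub>U (int k) i) \<longlonglongrightarrow> Uref" for i
    using KU dyn_U by (intro first_order_tracking) auto
  ultimately show ?thesis using power by blast
qed

end
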